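(* Let $P,Q$ be distinct points of $D$ and let $v_1,v_2\in S^1$ be the endpoints of the chord through $P$ and $Q$, with $v_1$ closer to $P$ than to $Q$. For a point $R\in D$ the following are equivalent: (1) there exists $w\in S^1$ with $w\neq v_1,v_2$ such that $R$ is the intersection point of the line $v_1w_2$ and the line $v_2w_1$, where $w_1\in S^1$ is the intersection point of the line $wP$ with $S^1$ other than $w$, and $w_2\in S^1$ is the intersection point of the line $wQ$ with $S^1$ other than $w$; (2) $\delta(P,Q,R)=\frac{1}{2}\Delta_1'(P,Q)$.
   Context: $D$ is the open unit disk in $\mathbb R^2$ and $S^1$ its boundary circle. Regard $D$ as the Beltrami–Klein model (hyperbolic lines are chords). For distinct $P,Q\in D$ with chord endpoints $v_1,v_2\in S^1$, $d'(P,Q)=\tfrac12\left|\log\frac{|v_1Q||v_2P|}{|v_1P||v_2Q|}\right|$ (Euclidean lengths), $d'(P,P)=0$; $\Delta_n'(P,Q)=\log\frac{e^{n d'(P,Q)}+1}{e^{n d'(P,Q)}-1}$ for $n\in\mathbb Z_{>0}$; $\delta(P,Q,R)=\min\{d'(R,S): S \text{ on the chord through } P,Q\}$. *)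

theory Defs
  imports "HOL-Analysis.Analysis"
begin

text \<open>The plane R^2 is modelled by the type complex (Euclidean distance = dist = cmod of difference).\<close>

definition Disk :: "complex set" where
  "Disk = {z. cmod z < 1}"

definition Circle :: "complex set" where
  "Circle = {z. cmod z = 1}"

definition is_chord_ends :: "complex \<Rightarrow> complex \<Rightarrow> complex \<Rightarrow> complex \<Rightarrow> bool" where
  "is_chord_ends P Q v1 v2 \<longleftrightarrow> v1 \<in> Circle \<and> v2 \<in> Circle \<and> v1 \<noteq> v2 \<and>
      collinear {v1, v2, P} \<and> collinear {v1, v2, Q}"

definition chord_ends :: "complex \<Rightarrow> complex \<Rightarrow> complex \<times> complex" where
  "chord_ends P Q = (SOME (v1, v2). is_chord_ends P Q v1 v2)"

text \<open>The Klein-model distance d'.  The formula is invariant under swapping v1 and v2.\<close>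
definition kdist :: "complex \<Rightarrow> complex \<Rightarrow> real" where
  "kdist P Q = (if P = Q then 0 else
     (case chord_ends P Q of (v1, v2) \<Rightarrow>
        1/2 * \<bar>ln ((dist v1 Q * dist v2 P) / (dist v1 P * dist v2 Q))\<bar>))"

definition Delta' :: "nat \<Rightarrow> complex \<Rightarrow> complex \<Rightarrow> real" where
  "Delta' n P Q = ln ((exp (real n * kdist P Q) + 1) / (exp (real n * kdist P Q) - 1))"

definition delta :: "complex \<Rightarrow> complex \<Rightarrow> complex \<Rightarrow> real" where
  "delta P Q R = Inf (kdist R ` {S \<in> Disk. collinear {P, Q, S}})"

end

theory Submission
  imports Defs
begin

text \<open>Put \<open>a = v1\<close>, \<open>b = v2\<close>, \<open>P = a + s (b - a)\<close>, \<open>Q = a + t (b - a)\<close> with \<open>0 < s < t < 1\<close>.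
  The Klein distance satisfies \<open>cosh\<^sup>2 d'(R, S) = (1 - \<langle>R, S\<rangle>)\<^sup>2 / ((1 - |R|\<^sup>2) (1 - |S|\<^sup>2))\<close>;
  minimising it along the chord gives
  \<open>cosh\<^sup>2 \<delta>(P, Q, R) = 4 (1 - \<langle>R, a\<rangle>) (1 - \<langle>R, b\<rangle>) / ((1 - |R|\<^sup>2) |a - b|\<^sup>2)\<close>, while
  \<open>cosh\<^sup>2 (\<Delta>'\<^sub>1(P, Q) / 2) = t (1 - s) / (t - s)\<close>. So condition (2) is one real equation in \<open>R\<close>.

  For condition (1) work in complex coordinates, where \<open>z\<close> lies on the chord \<open>uv\<close> of the unit
  circle iff \<open>z + u v cnj z = u + v\<close>. Then \<open>w1\<close>, \<open>w2\<close> are the second intersections of the lines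
  \<open>bR\<close>, \<open>aR\<close> with the circle, and a suitable \<open>w\<close> exists iff \<open>w1\<close> is the image of \<open>w2\<close>
  under the composite of the two involutions of the circle through \<open>Q\<close> and through \<open>P\<close>, a
  bilinear relation between \<open>w1\<close> and \<open>w2\<close>. Eliminating \<open>w1\<close>, \<open>w2\<close> in favour of \<open>R\<close> turns
  this relation into the same real equation.\<close>


section \<open>Chords of the unit circle\<close>

lemma cnj_unit: "cmod a = 1 \<Longrightarrow> cnj a = 1 / a"
  using divide_conv_cnj[of a 1] by simp

lemma collinear_iff_line_param:
  fixes a b z :: complex
  assumes "a \<noteq> b"
  shows "collinear {a, b, z} \<longleftrightarrow> (\<exists>u::real. z = a + of_real u * (b - a))"
proof -
  have "collinear {a, b, z} \<longleftrightarrow> collinear {b, z, a}" by (simp add: insert_commute)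
  also have "\<dots> \<longleftrightarrow> (\<exists>u. z = u *\<^sub>R b + (1 - u) *\<^sub>R a)"
    using assms by (simp add: collinear_3_expand)
  also have "\<dots> \<longleftrightarrow> (\<exists>u::real. z = a + of_real u * (b - a))"
    by (simp add: scaleR_conv_of_real algebra_simps)
  finally show ?thesis .
qed

lemma collinear_unit_circle_iff:
  fixes a b z :: complex
  assumes a: "cmod a = 1" and b: "cmod b = 1" and ab: "a \<noteq> b"
  shows "collinear {a, b, z} \<longleftrightarrow> z + a * b * cnj z = a + b"
proof
  assume "collinear {a, b, z}"
  then obtain u :: real where z: "z = a + of_real u * (b - a)"
    using collinear_iff_line_param[OF ab] by blast
  have "a \<noteq> 0" "b \<noteq> 0" using a b by auto
  then have "a * b * cnj z = b + of_real u * (a - b)"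
    unfolding z using a b by (simp add: cnj_unit field_simps)
  then show "z + a * b * cnj z = a + b" unfolding z by (simp add: algebra_simps)
next
  assume h: "z + a * b * cnj z = a + b"
  define q where "q = (z - a) / (b - a)"
  have a0: "a \<noteq> 0" and b0: "b \<noteq> 0" using a b by auto
  then have cz: "cnj z = (a + b - z) / (a * b)" using h by (simp add: field_simps)
  have "cnj q = (cnj z - cnj a) / (cnj b - cnj a)" unfolding q_def by simp
  also have "\<dots> = ((a + b - z) / (a * b) - 1 / a) / (1 / b - 1 / a)"
    unfolding cz cnj_unit[OF a] cnj_unit[OF b] ..
  also have "\<dots> = q" unfolding q_def using a0 b0 ab by (simp add: field_simps)
  finally have "cnj q = q" .
  then have "q = of_real (Re q)" by (metis Reals_cnj_iff complex_is_Real_iff of_real_Re)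
  moreover have "z = a + q * (b - a)" unfolding q_def using ab by simp
  ultimately show "collinear {a, b, z}" using collinear_iff_line_param[OF ab] by metis
qed

lemma disk_disjoint_tangent:
  fixes u X :: complex
  assumes u: "cmod u = 1" and X: "cmod X < 1"
  shows "X + u * u * cnj X \<noteq> 2 * u"
proof
  assume h: "X + u * u * cnj X = 2 * u"
  define z where "z = X / u"
  have "u \<noteq> 0" using u by auto
  then have "z + cnj z = (X + u * u * cnj X) / u" unfolding z_def using u by (simp add: cnj_unit field_simps)
  then have "z + cnj z = 2" using h \<open>u \<noteq> 0\<close> by simp
  then have "Re z = 1" by (simp add: complex_eq_iff)
  moreover have "cmod z < 1" unfolding z_def using u X by (simp add: norm_divide)
  ultimately show False using abs_Re_le_cmod[of z] by simp
qed

text \<open>Solve the chord equation \<open>X + u w cnj X = u + w\<close> for \<open>w\<close>.\<close>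

definition second_intersection :: "complex \<Rightarrow> complex \<Rightarrow> complex" where
  "second_intersection u X = (u - X) / (u * cnj X - 1)"

lemma second_intersection:
  fixes u X :: complex
  assumes u: "cmod u = 1" and X: "cmod X < 1"
  defines "w \<equiv> second_intersection u X"
  shows "cmod w = 1" "w \<noteq> u" "collinear {u, X, w}"
proof -
  have "cmod (u * cnj X) < 1" using u X by (simp add: norm_mult)
  then have nz: "u * cnj X - 1 \<noteq> 0" by auto
  have "u * cnj X - 1 = u * cnj (X - u)" using u by (auto simp: cnj_unit field_simps)
  then have "cmod (u * cnj X - 1) = cmod u * cmod (cnj (X - u))" by (simp only: norm_mult)
  then have "cmod (u * cnj X - 1) = cmod (u - X)"
    using u by (simp only: complex_mod_cnj norm_minus_commute mult_1)
  moreover have "u \<noteq> X" using u X by auto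
  ultimately show w: "cmod w = 1" unfolding w_def second_intersection_def by (simp add: norm_divide)
  have e: "w * (u * cnj X - 1) = u - X" unfolding w_def second_intersection_def using nz by simp
  show wu: "w \<noteq> u"
  proof
    assume "w = u"
    with e have "X + u * u * cnj X = 2 * u" by (simp add: algebra_simps)
    with disk_disjoint_tangent[OF u X] show False by simp
  qed
  have "collinear {u, w, X}"
    using collinear_unit_circle_iff[OF u w wu[symmetric]] e by (simp add: algebra_simps)
  then show "collinear {u, X, w}" by (simp add: insert_commute)
qed

lemma dist_line_point:
  fixes a b :: complex and s :: real
  shows "dist a (a + of_real s * (b - a)) = \<bar>s\<bar> * dist a b"
    and "dist b (a + of_real s * (b - a)) = \<bar>1 - s\<bar> * dist a b"
proof -
  have "a - (a + of_real s * (b - a)) = of_real s * (a - b)" by (simp add: algebra_simps)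
  then show "dist a (a + of_real s * (b - a)) = \<bar>s\<bar> * dist a b" by (simp add: dist_norm norm_mult)
  have "b - (a + of_real s * (b - a)) = of_real (1 - s) * (b - a)" by (simp add: algebra_simps)
  then have "dist b (a + of_real s * (b - a)) = cmod (of_real (1 - s) * (b - a))"
    by (simp only: dist_norm)
  then show "dist b (a + of_real s * (b - a)) = \<bar>1 - s\<bar> * dist a b"
    by (simp only: norm_mult norm_of_real dist_norm norm_minus_commute)
qed

lemma cmod_sq_Re_Im: "cmod z ^ 2 = Re z * Re z + Im z * Im z"
  by (metis cmod_power2 power2_eq_square)

lemma one_minus_Re_line_points:
  fixes a b :: complex and s t :: real
  assumes "cmod a = 1" and "cmod b = 1"
  shows "1 - Re ((a + of_real s * (b - a)) * cnj (a + of_real t * (b - a)))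
    = ((1 - s) * t + s * (1 - t)) * cmod (a - b) ^ 2 / 2"
  using assms cmod_sq_Re_Im[of a] cmod_sq_Re_Im[of b]
  by (simp add: cmod_sq_Re_Im algebra_simps) algebra

lemma one_minus_norm_line_point:
  fixes a b :: complex and s :: real
  assumes "cmod a = 1" and "cmod b = 1"
  shows "1 - cmod (a + of_real s * (b - a)) ^ 2 = s * (1 - s) * cmod (a - b) ^ 2"
  using assms cmod_sq_Re_Im[of a] cmod_sq_Re_Im[of b]
  by (simp add: cmod_sq_Re_Im algebra_simps) algebra

lemma one_minus_norm_sq_pos: "cmod z < 1 \<Longrightarrow> 1 - cmod z ^ 2 > 0"
  by (simp add: power_less_one_iff)

lemma line_point_in_disk_iff:
  fixes a b :: complex and s :: real
  assumes "cmod a = 1" and "cmod b = 1" and "a \<noteq> b"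
  shows "cmod (a + of_real s * (b - a)) < 1 \<longleftrightarrow> 0 < s \<and> s < 1"
proof -
  have "cmod (a + of_real s * (b - a)) < 1 \<longleftrightarrow> 0 < 1 - cmod (a + of_real s * (b - a)) ^ 2"
    by (simp add: power_less_one_iff)
  also have "\<dots> \<longleftrightarrow> 0 < s * (1 - s)"
    using assms by (simp add: one_minus_norm_line_point zero_less_mult_iff)
  also have "\<dots> \<longleftrightarrow> 0 < s \<and> s < 1" by (auto simp: zero_less_mult_iff)
  finally show ?thesis .
qed

lemma collinear_disk_point_param:
  fixes a b R :: complex
  assumes "cmod a = 1" "cmod b = 1" "a \<noteq> b" "collinear {a, b, R}" "cmod R < 1"
  obtains s :: real where "R = a + of_real s * (b - a)" "0 < s" "s < 1"
proof -
  obtain s :: real where R: "R = a + of_real s * (b - a)"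
    using assms(3,4) collinear_iff_line_param by blast
  moreover have "0 < s" "s < 1" using assms(5) line_point_in_disk_iff[OF assms(1-3)] unfolding R by auto
  ultimately show ?thesis by (rule that)
qed

lemma collinear_chord_iff:
  fixes a b P Q S :: complex
  assumes ab: "a \<noteq> b" and "collinear {a, b, P}" "collinear {a, b, Q}" and PQ: "P \<noteq> Q"
  shows "collinear {P, Q, S} \<longleftrightarrow> collinear {a, b, S}"
proof
  have "P \<in> affine hull {a, b}" "Q \<in> affine hull {a, b}"
    using assms collinear_3_affine_hull by blast+
  moreover have "a \<in> affine hull {a, b}" "b \<in> affine hull {a, b}" by (simp_all add: hull_inc)
  ultimately have "collinear {a, b, P, Q}" unfolding collinear_affine_hull by blast
  then have "collinear {P, Q, a}" "collinear {P, Q, b}" by (auto intro: collinear_subset)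
  then have "a \<in> affine hull {P, Q}" "b \<in> affine hull {P, Q}"
    using PQ collinear_3_affine_hull by blast+
  moreover assume "collinear {P, Q, S}"
  then have "S \<in> affine hull {P, Q}" using PQ collinear_3_affine_hull by blast
  ultimately show "collinear {a, b, S}" unfolding collinear_affine_hull by blast
next
  assume "collinear {a, b, S}"
  then have "{P, Q, S} \<subseteq> affine hull {a, b}" using assms collinear_3_affine_hull by blast
  then show "collinear {P, Q, S}" unfolding collinear_affine_hull by blast
qed

lemma chord_in_disk:
  fixes a b :: complex
  assumes "cmod a = 1" "cmod b = 1" "a \<noteq> b"
  shows "{S \<in> Disk. collinear {a, b, S}} = (\<lambda>x. a + of_real x * (b - a)) ` {0<..<1}"
proof -
  have "S \<in> Disk \<and> collinear {a, b, S} \<longleftrightarrow> (\<exists>x\<in>{0<..<1}. S = a + of_real x * (b - a))" for S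
    unfolding Disk_def collinear_iff_line_param[OF assms(3)] using line_point_in_disk_iff[OF assms]
    by (metis greaterThanLessThan_iff mem_Collect_eq)
  then show ?thesis by blast
qed

section \<open>The Klein distance\<close>

definition cross_ratio :: "complex \<Rightarrow> complex \<Rightarrow> complex \<Rightarrow> complex \<Rightarrow> real" where
  "cross_ratio a b R S = (dist a S * dist b R) / (dist a R * dist b S)"

lemma cross_ratio_line_points:
  fixes a b :: complex and s t :: real
  assumes "a \<noteq> b" and "0 < s" "s < 1" and "0 < t" "t < 1"
  shows "cross_ratio a b (a + of_real s * (b - a)) (a + of_real t * (b - a))
    = t * (1 - s) / (s * (1 - t))"
  unfolding cross_ratio_def dist_line_point using assms by (simp add: field_simps)

lemma cosh_sq_half_abs_ln:
  fixes X :: real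
  assumes "X > 0"
  shows "cosh (1/2 * \<bar>ln X\<bar>) ^ 2 = (X + 1) ^ 2 / (4 * X)"
proof -
  have "cosh (1/2 * \<bar>ln X\<bar>) = cosh (ln X / 2)" by simp
  then have "cosh (1/2 * \<bar>ln X\<bar>) ^ 2 = (cosh (2 * (ln X / 2)) + 1) / 2"
    by (simp only: cosh_double_cosh) simp
  also have "\<dots> = (X + 1) ^ 2 / (4 * X)"
    using assms by (simp add: cosh_ln_real field_simps power2_eq_square)
  finally show ?thesis .
qed

lemma cosh_sq_cross_ratio_line_points:
  fixes a b :: complex and s t :: real
  assumes a: "cmod a = 1" and b: "cmod b = 1" and ab: "a \<noteq> b"
    and s: "0 < s" "s < 1" and t: "0 < t" "t < 1"
  defines "R \<equiv> a + of_real s * (b - a)" and "S \<equiv> a + of_real t * (b - a)"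
  shows "cosh (1/2 * \<bar>ln (cross_ratio a b R S)\<bar>) ^ 2
    = (1 - Re (R * cnj S)) ^ 2 / ((1 - cmod R ^ 2) * (1 - cmod S ^ 2))"
proof -
  define X where "X = t * (1 - s) / (s * (1 - t))"
  have "X > 0" unfolding X_def using s t by simp
  then have "cosh (1/2 * \<bar>ln (cross_ratio a b R S)\<bar>) ^ 2 = (X + 1) ^ 2 / (4 * X)"
    unfolding R_def S_def cross_ratio_line_points[OF ab s t] X_def[symmetric]
    by (rule cosh_sq_half_abs_ln)
  also have "\<dots> = ((1 - s) * t + s * (1 - t)) ^ 2 / (4 * (s * (1 - s)) * (t * (1 - t)))"
  proof -
    have "(t * u / (s * v) + 1) ^ 2 / (4 * (t * u / (s * v))) = (u * t + s * v) ^ 2 / (4 * (s * u) * (t * v))"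
      if "s > 0" "u > 0" "t > 0" "v > 0" for s u t v :: real
      using that by (simp add: field_simps power2_eq_square)
    then show ?thesis unfolding X_def using s t by simp
  qed
  also have "\<dots> = (1 - Re (R * cnj S)) ^ 2 / ((1 - cmod R ^ 2) * (1 - cmod S ^ 2))"
  proof -
    have "A ^ 2 / (4 * p * q) = (A * L / 2) ^ 2 / ((p * L) * (q * L))" if "L \<noteq> 0" for A p q L :: real
      using that by (simp add: power2_eq_square)
    then show ?thesis
      unfolding R_def S_def one_minus_Re_line_points[OF a b] one_minus_norm_line_point[OF a b]
      using ab by simp
  qed
  finally show ?thesis .
qed

lemma line_meets_unit_circle:
  fixes R d :: complex
  assumes R: "cmod R < 1" and d: "d \<noteq> 0"
  obtains x :: real where "x > 0" and "cmod (R + of_real x * d) = 1"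
proof -
  define f where "f x = cmod (R + of_real x * d)" for x :: real
  have "cmod (of_real (2 / cmod d) * d) - cmod R \<le> f (2 / cmod d)"
    unfolding f_def using norm_diff_ineq[of "of_real (2 / cmod d) * d" R] by (simp add: add.commute)
  moreover have "cmod (of_real (2 / cmod d) * d) = 2" unfolding norm_mult norm_of_real using d by simp
  ultimately have "f 0 \<le> 1" "1 \<le> f (2 / cmod d)" using R unfolding f_def by auto
  moreover have "continuous_on {0 .. 2 / cmod d} f" unfolding f_def by (intro continuous_intros)
  ultimately obtain x where "0 \<le> x" "f x = 1"
    using IVT'[of f 0 1 "2 / cmod d"] by auto
  moreover have "x \<noteq> 0" using \<open>f x = 1\<close> R unfolding f_def by auto
  ultimately show ?thesis unfolding f_def by (intro that[of x]) auto
qed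

lemma chord_ends_exist:
  fixes R S :: complex
  assumes R: "cmod R < 1" and RS: "R \<noteq> S"
  shows "\<exists>a b. is_chord_ends R S a b"
proof -
  define d where "d = S - R"
  have d: "d \<noteq> 0" and d': "- d \<noteq> 0" unfolding d_def using RS by auto
  obtain x where x: "x > 0" "cmod (R + of_real x * d) = 1"
    using line_meets_unit_circle[OF R d] by blast
  obtain y where y: "y > 0" "cmod (R + of_real y * - d) = 1"
    using line_meets_unit_circle[OF R d'] by blast
  define a where "a = R + of_real x * d"
  define b where "b = R + of_real (- y) * d"
  have "a \<noteq> b"
  proof
    assume "a = b"
    then have "of_real (x + y) * d = 0" unfolding a_def b_def by (simp add: algebra_simps)
    then show False using x y d by (simp del: of_real_add add: of_real_add[symmetric])
  qed
  moreover have "collinear {a, b, X}" if "X \<in> {R, S}" for X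
  proof -
    have "\<forall>z \<in> {a, b, X}. \<exists>c. z = R + c *\<^sub>R d"
      using that unfolding a_def b_def d_def
      by (auto simp: scaleR_conv_of_real intro: exI[of _ x] exI[of _ "- y"] exI[of _ 0] exI[of _ 1])
    then show ?thesis unfolding collinear_alt by blast
  qed
  ultimately have "is_chord_ends R S a b"
    using x y unfolding is_chord_ends_def Circle_def a_def b_def by auto
  then show ?thesis by blast
qed

lemma is_chord_ends_chord_ends:
  assumes "cmod R < 1" and "R \<noteq> S"
  shows "is_chord_ends R S (fst (chord_ends R S)) (snd (chord_ends R S))"
proof -
  obtain a b where "is_chord_ends R S a b" using chord_ends_exist[OF assms] by blast
  then have "case chord_ends R S of (a, b) \<Rightarrow> is_chord_ends R S a b"
    unfolding chord_ends_def by (rule someI[where P = "\<lambda>(a, b). is_chord_ends R S a b" and x = "(a, b)", simplified])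
  then show ?thesis by (simp split: prod.splits)
qed

lemma kdist_nonneg: "kdist R S \<ge> 0"
  unfolding kdist_def by (auto split: prod.split)

lemma kdist_chord_ends:
  "R \<noteq> S \<Longrightarrow> kdist R S = 1/2 * \<bar>ln (cross_ratio (fst (chord_ends R S)) (snd (chord_ends R S)) R S)\<bar>"
  unfolding kdist_def cross_ratio_def by (simp split: prod.split)

lemma cosh_sq_eq_imp_eq:
  fixes x y :: real
  assumes "x \<ge> 0" "y \<ge> 0" "cosh x ^ 2 = cosh y ^ 2"
  shows "x = y"
  using assms by (simp add: power2_eq_iff_nonneg)

lemma cosh_sq_cross_ratio_chord_ends:
  assumes "is_chord_ends R S a b" "cmod R < 1" "cmod S < 1"
  shows "cosh (1/2 * \<bar>ln (cross_ratio a b R S)\<bar>) ^ 2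
    = (1 - Re (R * cnj S)) ^ 2 / ((1 - cmod R ^ 2) * (1 - cmod S ^ 2))"
proof -
  have a: "cmod a = 1" and b: "cmod b = 1" and ab: "a \<noteq> b"
    and cR: "collinear {a, b, R}" and cS: "collinear {a, b, S}"
    using assms(1) unfolding is_chord_ends_def Circle_def by auto
  obtain s where s: "R = a + of_real s * (b - a)" "0 < s" "s < 1"
    using collinear_disk_point_param[OF a b ab cR assms(2)] .
  obtain t where t: "S = a + of_real t * (b - a)" "0 < t" "t < 1"
    using collinear_disk_point_param[OF a b ab cS assms(3)] .
  show ?thesis unfolding s(1) t(1) using cosh_sq_cross_ratio_line_points[OF a b ab s(2,3) t(2,3)] .
qed

lemma cosh_sq_kdist:
  assumes R: "cmod R < 1" and S: "cmod S < 1"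
  shows "cosh (kdist R S) ^ 2 = (1 - Re (R * cnj S)) ^ 2 / ((1 - cmod R ^ 2) * (1 - cmod S ^ 2))"
proof (cases "R = S")
  case True
  have "1 - cmod R ^ 2 \<noteq> 0" using one_minus_norm_sq_pos[OF R] by simp
  moreover have "Re (R * cnj R) = cmod R ^ 2" by (simp add: cmod_sq_Re_Im)
  ultimately show ?thesis unfolding True kdist_def by (simp add: power2_eq_square)
next
  case False
  show ?thesis unfolding kdist_chord_ends[OF False]
    by (rule cosh_sq_cross_ratio_chord_ends[OF is_chord_ends_chord_ends[OF R False] R S])
qed

text \<open>In particular \<open>kdist\<close> does not depend on which chord endpoint \<open>chord_ends\<close> picks as \<open>v1\<close>.\<close>

lemma kdist_eq_cross_ratio:
  assumes "is_chord_ends R S a b" "cmod R < 1" "cmod S < 1"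
  shows "kdist R S = 1/2 * \<bar>ln (cross_ratio a b R S)\<bar>"
proof (rule cosh_sq_eq_imp_eq)
  show "kdist R S \<ge> 0" by (rule kdist_nonneg)
  show "1/2 * \<bar>ln (cross_ratio a b R S)\<bar> \<ge> 0" by simp
  show "cosh (kdist R S) ^ 2 = cosh (1/2 * \<bar>ln (cross_ratio a b R S)\<bar>) ^ 2"
    unfolding cosh_sq_kdist[OF assms(2,3)] cosh_sq_cross_ratio_chord_ends[OF assms] ..
qed

lemma cosh_sq_kdist_line_point:
  fixes a b R :: complex and x :: real
  assumes a: "cmod a = 1" and b: "cmod b = 1" and ab: "a \<noteq> b" and R: "cmod R < 1"
    and x: "0 < x" "x < 1"
  defines "\<alpha> \<equiv> 1 - Re (R * cnj a)" and "\<beta> \<equiv> 1 - Re (R * cnj b)"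
    and "N \<equiv> (1 - cmod R ^ 2) * cmod (a - b) ^ 2"
  shows "cosh (kdist R (a + of_real x * (b - a))) ^ 2
    = 4 * \<alpha> * \<beta> / N + ((1 - x) * \<alpha> - x * \<beta>) ^ 2 / (x * (1 - x) * N)"
proof -
  have "cmod (a + of_real x * (b - a)) < 1" using line_point_in_disk_iff[OF a b ab] x by simp
  moreover have "1 - Re (R * cnj (a + of_real x * (b - a))) = (1 - x) * \<alpha> + x * \<beta>"
    unfolding \<alpha>_def \<beta>_def by (simp add: algebra_simps)
  ultimately have "cosh (kdist R (a + of_real x * (b - a))) ^ 2
      = ((1 - x) * \<alpha> + x * \<beta>) ^ 2 / ((1 - cmod R ^ 2) * (x * (1 - x) * cmod (a - b) ^ 2))"
    by (simp add: cosh_sq_kdist[OF R] one_minus_norm_line_point[OF a b])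
  also have "(1 - cmod R ^ 2) * (x * (1 - x) * cmod (a - b) ^ 2) = x * (1 - x) * N"
    unfolding N_def by (simp add: mult_ac)
  also have "((1 - x) * \<alpha> + x * \<beta>) ^ 2 = 4 * \<alpha> * \<beta> * (x * (1 - x)) + ((1 - x) * \<alpha> - x * \<beta>) ^ 2"
    by (simp add: algebra_simps power2_eq_square)
  also have "(4 * \<alpha> * \<beta> * (x * (1 - x)) + ((1 - x) * \<alpha> - x * \<beta>) ^ 2) / (x * (1 - x) * N)
      = 4 * \<alpha> * \<beta> / N + ((1 - x) * \<alpha> - x * \<beta>) ^ 2 / (x * (1 - x) * N)"
  proof -
    have "N \<noteq> 0" unfolding N_def using one_minus_norm_sq_pos[OF R] ab by simp
    then have "(4 * \<alpha> * \<beta> * y + D) / (y * N) = 4 * \<alpha> * \<beta> / N + D / (y * N)" if "y \<noteq> 0" for y D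
      using that by (simp add: field_simps)
    then show ?thesis using x by simp
  qed
  finally show ?thesis .
qed

lemma cosh_sq_delta:
  fixes a b P Q R :: complex
  assumes a: "cmod a = 1" and b: "cmod b = 1" and ab: "a \<noteq> b"
    and "collinear {a, b, P}" "collinear {a, b, Q}" "P \<noteq> Q" and R: "cmod R < 1"
  shows "delta P Q R \<ge> 0"
    and "cosh (delta P Q R) ^ 2
      = 4 * (1 - Re (R * cnj a)) * (1 - Re (R * cnj b)) / ((1 - cmod R ^ 2) * cmod (a - b) ^ 2)"
proof -
  define \<alpha> where "\<alpha> = 1 - Re (R * cnj a)"
  define \<beta> where "\<beta> = 1 - Re (R * cnj b)"
  define N where "N = (1 - cmod R ^ 2) * cmod (a - b) ^ 2"
  have \<alpha>: "\<alpha> > 0" unfolding \<alpha>_def using R a abs_Re_le_cmod[of "R * cnj a"] by (simp add: norm_mult)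
  have \<beta>: "\<beta> > 0" unfolding \<beta>_def using R b abs_Re_le_cmod[of "R * cnj b"] by (simp add: norm_mult)
  have N: "N > 0" unfolding N_def using one_minus_norm_sq_pos[OF R] ab by simp
  define f where "f x = a + of_real x * (b - a)" for x :: real
  note kdist_f = cosh_sq_kdist_line_point[OF a b ab R, folded f_def \<alpha>_def \<beta>_def N_def]
  define x\<^sub>0 where "x\<^sub>0 = \<alpha> / (\<alpha> + \<beta>)"
  have x\<^sub>0: "0 < x\<^sub>0" "x\<^sub>0 < 1" "(1 - x\<^sub>0) * \<alpha> - x\<^sub>0 * \<beta> = 0"
    unfolding x\<^sub>0_def using \<alpha> \<beta> by (auto simp: field_simps)
  have min: "kdist R (f x\<^sub>0) \<le> kdist R (f x)" if "0 < x" "x < 1" for x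
  proof -
    have "cosh (kdist R (f x\<^sub>0)) ^ 2 \<le> cosh (kdist R (f x)) ^ 2"
      unfolding kdist_f[OF x\<^sub>0(1,2)] kdist_f[OF that] x\<^sub>0(3) using that N by simp
    then have "cosh (kdist R (f x\<^sub>0)) \<le> cosh (kdist R (f x))" by (simp add: abs_le_square_iff)
    then show ?thesis by (simp add: cosh_real_nonneg_le_iff kdist_nonneg)
  qed
  have "delta P Q R = kdist R (f x\<^sub>0)"
    unfolding delta_def collinear_chord_iff[OF ab assms(4-6)] chord_in_disk[OF a b ab] f_def[symmetric]
    by (rule cInf_eq_minimum) (use x\<^sub>0 min in auto)
  then show "delta P Q R \<ge> 0" "cosh (delta P Q R) ^ 2 = 4 * \<alpha> * \<beta> / N"
    using kdist_f[OF x\<^sub>0(1,2)] x\<^sub>0(3) by (simp_all add: kdist_nonneg)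
qed

lemma cosh_sq_half_ln_coth:
  fixes y :: real
  assumes "y > 1"
  shows "cosh (ln ((y + 1) / (y - 1)) / 2) ^ 2 = y ^ 2 / (y ^ 2 - 1)"
proof -
  have "cosh (ln ((y + 1) / (y - 1)) / 2) = cosh (1/2 * \<bar>ln ((y + 1) / (y - 1))\<bar>)" by simp
  moreover have "(y + 1) / (y - 1) > 0" using assms by simp
  ultimately have "cosh (ln ((y + 1) / (y - 1)) / 2) ^ 2 = ((y + 1) / (y - 1) + 1) ^ 2 / (4 * ((y + 1) / (y - 1)))"
    using cosh_sq_half_abs_ln by presburger
  also have "\<dots> = (2 * y / (y - 1)) ^ 2 / (4 * ((y + 1) / (y - 1)))"
    using assms by (simp add: field_simps)
  also have "\<dots> = y ^ 2 / ((y - 1) * (y + 1))"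
  proof -
    have "(2 * y / u) ^ 2 / (4 * ((y + 1) / u)) = y ^ 2 / (u * (y + 1))" if "u > 0" for u
    proof -
      have "u + u * y > 0" using that assms by (simp add: pos_add_strict)
      then show ?thesis using that by (simp add: field_simps power2_eq_square)
    qed
    then show ?thesis using assms by simp
  qed
  also have "\<dots> = y ^ 2 / (y ^ 2 - 1)" by (simp add: algebra_simps power2_eq_square)
  finally show ?thesis .
qed

lemma Delta'_one_line_points:
  fixes a b P Q :: complex and s t :: real
  assumes "is_chord_ends P Q a b"
    and P: "P = a + of_real s * (b - a)" and Q: "Q = a + of_real t * (b - a)"
    and s: "0 < s" and st: "s < t" and t: "t < 1"
  shows "Delta' 1 P Q > 0" and "cosh (Delta' 1 P Q / 2) ^ 2 = t * (1 - s) / (t - s)"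
proof -
  have a: "cmod a = 1" and b: "cmod b = 1" and ab: "a \<noteq> b"
    using assms(1) unfolding is_chord_ends_def Circle_def by auto
  have s1: "s < 1" and t0: "0 < t" using st s t by auto
  have "cmod P < 1" "cmod Q < 1" unfolding P Q using line_point_in_disk_iff[OF a b ab] s s1 t0 t by auto
  define X where "X = t * (1 - s) / (s * (1 - t))"
  have "s * (1 - t) < t * (1 - s)" using st by (simp add: algebra_simps)
  moreover have "s * (1 - t) > 0" using s t by simp
  ultimately have X: "X > 1" unfolding X_def by simp
  have "kdist P Q = 1/2 * ln X"
    using kdist_eq_cross_ratio[OF assms(1) \<open>cmod P < 1\<close> \<open>cmod Q < 1\<close>] X
    unfolding P Q cross_ratio_line_points[OF ab s s1 t0 t] X_def[symmetric] by simp
  moreover have "ln X > 0" using X by simp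
  ultimately have k: "2 * kdist P Q = ln X" "kdist P Q > 0" by simp_all
  have y: "exp (kdist P Q) ^ 2 = X" using exp_of_nat_mult[of 2 "kdist P Q"] k(1) X by simp
  have "exp (kdist P Q) > 1" using k(2) by simp
  then have "(exp (kdist P Q) + 1) / (exp (kdist P Q) - 1) > 1" by simp
  then show "Delta' 1 P Q > 0" unfolding Delta'_def by simp
  have "cosh (Delta' 1 P Q / 2) ^ 2 = X / (X - 1)"
    unfolding Delta'_def using cosh_sq_half_ln_coth[OF \<open>exp (kdist P Q) > 1\<close>] y by simp
  also have "\<dots> = t * (1 - s) / (t * (1 - s) - s * (1 - t))"
    unfolding X_def using s t st by (simp add: divide_simps)
  also have "t * (1 - s) - s * (1 - t) = t - s" by (simp add: algebra_simps)
  finally show "cosh (Delta' 1 P Q / 2) ^ 2 = t * (1 - s) / (t - s)" .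
qed

text \<open>Both conditions of the theorem reduce to this equation, for \<open>P = a + s (b - a)\<close> and
  \<open>Q = a + t (b - a)\<close>.\<close>

definition locus_equation :: "complex \<Rightarrow> complex \<Rightarrow> real \<Rightarrow> real \<Rightarrow> complex \<Rightarrow> bool" where
  "locus_equation a b s t R \<longleftrightarrow>
    4 * (1 - Re (R * cnj a)) * (1 - Re (R * cnj b)) * (t - s) = t * (1 - s) * (1 - cmod R ^ 2) * cmod (a - b) ^ 2"

lemma delta_eq_half_Delta'_iff:
  fixes a b P Q R :: complex and s t :: real
  assumes chord: "is_chord_ends P Q a b"
    and P: "P = a + of_real s * (b - a)" and Q: "Q = a + of_real t * (b - a)"
    and s: "0 < s" and st: "s < t" and t: "t < 1" and R: "cmod R < 1"
  shows "delta P Q R = Delta' 1 P Q / 2 \<longleftrightarrow> locus_equation a b s t R"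
proof -
  have a: "cmod a = 1" and b: "cmod b = 1" and ab: "a \<noteq> b" and "collinear {a, b, P}" "collinear {a, b, Q}"
    using chord unfolding is_chord_ends_def Circle_def by auto
  moreover have "P \<noteq> Q" unfolding P Q using st ab by simp
  ultimately have \<delta>: "delta P Q R \<ge> 0"
    "cosh (delta P Q R) ^ 2 = 4 * (1 - Re (R * cnj a)) * (1 - Re (R * cnj b)) / ((1 - cmod R ^ 2) * cmod (a - b) ^ 2)"
    using cosh_sq_delta R by blast+
  note \<Delta> = Delta'_one_line_points[OF chord P Q s st t]
  have "delta P Q R = Delta' 1 P Q / 2 \<longleftrightarrow> cosh (delta P Q R) ^ 2 = cosh (Delta' 1 P Q / 2) ^ 2"
    using cosh_sq_eq_imp_eq[OF \<delta>(1), of "Delta' 1 P Q / 2"] \<Delta>(1) by auto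
  also have "\<dots> \<longleftrightarrow> 4 * (1 - Re (R * cnj a)) * (1 - Re (R * cnj b)) / ((1 - cmod R ^ 2) * cmod (a - b) ^ 2)
      = t * (1 - s) / (t - s)"
    unfolding \<delta>(2) \<Delta>(2) ..
  also have "\<dots> \<longleftrightarrow> locus_equation a b s t R"
  proof -
    have "x / (n * l) = y / d \<longleftrightarrow> x * d = y * n * l" if "n \<noteq> 0" "l \<noteq> 0" "d \<noteq> 0" for x y n l d :: real
      using that by (simp add: frac_eq_eq mult.assoc)
    moreover have "1 - cmod R ^ 2 \<noteq> 0" using one_minus_norm_sq_pos[OF R] by simp
    ultimately show ?thesis unfolding locus_equation_def using ab st by simp
  qed
  finally show ?thesis .
qed

section \<open>The construction\<close>

definition chord_form :: "complex \<Rightarrow> complex \<Rightarrow> complex \<Rightarrow> complex \<Rightarrow> complex \<Rightarrow> complex" where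
  "chord_form a b s w w' = (1 - s) * b * (a - w) * (a - w') + s * a * (b - w) * (b - w')"

lemma chord_form_eq_0_endpoints:
  assumes "a \<noteq> 0" "b \<noteq> 0" "a \<noteq> b" "s \<noteq> 0" "s \<noteq> 1" and "chord_form a b s w w' = 0"
  shows "w = a \<longleftrightarrow> w' = b" and "w = b \<longleftrightarrow> w' = a"
  using assms by (auto simp: chord_form_def)

lemma chord_form_line_point:
  fixes a b w w' :: complex and s :: real
  assumes a: "cmod a = 1" and b: "cmod b = 1"
  defines "P \<equiv> a + of_real s * (b - a)"
  shows "a * b * (P + w * w' * cnj P - w - w') = chord_form a b (of_real s) w w'"
proof -
  have "cnj P = 1 / a + of_real s * (1 / b - 1 / a)"
    unfolding P_def using cnj_unit[OF a] cnj_unit[OF b] by simp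
  moreover have "a \<noteq> 0" "b \<noteq> 0" using a b by auto
  ultimately have "a * b * cnj P = b + of_real s * (a - b)" by (simp add: field_simps)
  then show ?thesis unfolding P_def chord_form_def by algebra
qed

lemma collinear_line_point_iff_chord_form:
  fixes a b w w' :: complex and s :: real
  assumes a: "cmod a = 1" and b: "cmod b = 1" and w: "cmod w = 1" and w': "cmod w' = 1" "w \<noteq> w'"
  shows "collinear {w, a + of_real s * (b - a), w'} \<longleftrightarrow> chord_form a b (of_real s) w w' = 0"
proof -
  define P where "P = a + of_real s * (b - a)"
  have "a \<noteq> 0" "b \<noteq> 0" using a b by auto
  have "collinear {w, P, w'} \<longleftrightarrow> collinear {w, w', P}" by (simp add: insert_commute)
  also have "\<dots> \<longleftrightarrow> P + w * w' * cnj P - w - w' = 0"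
    using collinear_unit_circle_iff[OF w w'] by (simp add: diff_diff_eq)
  also have "\<dots> \<longleftrightarrow> a * b * (P + w * w' * cnj P - w - w') = 0"
    using \<open>a \<noteq> 0\<close> \<open>b \<noteq> 0\<close> by simp
  also have "\<dots> \<longleftrightarrow> chord_form a b (of_real s) w w' = 0"
    unfolding P_def chord_form_line_point[OF a b] ..
  finally show ?thesis unfolding P_def .
qed

lemma chord_form_diagonal_ne_0:
  fixes a b w :: complex and s :: real
  assumes a: "cmod a = 1" and b: "cmod b = 1" and ab: "a \<noteq> b" and s: "0 < s" "s < 1"
    and w: "cmod w = 1"
  shows "chord_form a b (of_real s) w w \<noteq> 0"
proof
  define P where "P = a + of_real s * (b - a)"
  assume "chord_form a b (of_real s) w w = 0"
  then have "a * b * (P + w * w * cnj P - w - w) = 0"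
    using chord_form_line_point[OF a b, of s w w] unfolding P_def by simp
  moreover have "a \<noteq> 0" "b \<noteq> 0" using a b by auto
  ultimately have "P + w * w * cnj P - w - w = 0" by simp
  then have "P + w * w * cnj P = 2 * w" by algebra
  moreover have "cmod P < 1" unfolding P_def using line_point_in_disk_iff[OF a b ab] s by simp
  ultimately show False using disk_disjoint_tangent[OF w] by blast
qed

text \<open>With \<open>P = a + s (b - a)\<close> and \<open>Q = a + t (b - a)\<close>, the zero set of \<open>projectivity_form a b s t\<close>
  is the graph of the projectivity \<open>w2 \<mapsto> w \<mapsto> w1\<close> of the circle, where \<open>w2, Q, w\<close> and
  \<open>w, P, w1\<close> are collinear.\<close>

definition projectivity_form ::
    "complex \<Rightarrow> complex \<Rightarrow> complex \<Rightarrow> complex \<Rightarrow> complex \<Rightarrow> complex \<Rightarrow> complex" where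
  "projectivity_form a b s t w1 w2 = (a - w2) * (b - w1) * (t - s) + t * (1 - s) * (a - b) * (w1 - w2)"

lemma projectivity_form_combination:
  "((1 - t) * b * (a - w) + t * a * (b - w)) * projectivity_form a b s t w1 w2
    = - t * (1 - t) * (a - b) * chord_form a b s w w1
      + ((b - w1) * (t - s) + t * (1 - s) * (a - b)) * chord_form a b t w w2"
  unfolding projectivity_form_def chord_form_def by algebra

lemma projectivity_form_intersection:
  assumes "R + a * w2 * r = a + w2" and "R + b * w1 * r = b + w1"
  shows "(a * w2 - b * w1) ^ 2 * ((2 * a - R - r * a ^ 2) * (2 * b - R - r * b ^ 2) * (t - s)
      + t * (1 - s) * (1 - R * r) * (a - b) ^ 2)
    = (a - b) ^ 2 * (a - w1) * (b - w2) * projectivity_form a b s t w1 w2"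
proof -
  define D where "D = a * w2 - b * w1"
  have Dr: "D * r = a + w2 - b - w1" and DR: "D * R = a * b * (w2 - w1) + (a - b) * w1 * w2"
    unfolding D_def using assms by algebra+
  have "D * (2 * a - R - r * a ^ 2) = - (a - b) * (a - w1) * (a - w2)"
    "D * (2 * b - R - r * b ^ 2) = - (a - b) * (b - w1) * (b - w2)"
    "D ^ 2 * (1 - R * r) = (a - b) * (a - w1) * (b - w2) * (w1 - w2)"
    using Dr DR unfolding D_def by algebra+
  then show ?thesis unfolding projectivity_form_def D_def[symmetric] by algebra
qed

lemma locus_equation_complex_form:
  fixes a b R :: complex and s t :: real
  assumes a: "cmod a = 1" and b: "cmod b = 1"
  shows "(2 * a - R - cnj R * a ^ 2) * (2 * b - R - cnj R * b ^ 2) * (of_real t - of_real s)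
      + of_real t * (1 - of_real s) * (1 - R * cnj R) * (a - b) ^ 2
    = a * b * of_real (4 * (1 - Re (R * cnj a)) * (1 - Re (R * cnj b)) * (t - s)
        - t * (1 - s) * (1 - cmod R ^ 2) * cmod (a - b) ^ 2)"
proof -
  have a0: "a \<noteq> 0" and b0: "b \<noteq> 0" using a b by auto
  have "complex_of_real (Re z) = (z + cnj z) / 2" for z using complex_add_cnj[of z] by simp
  then have \<alpha>: "2 * a - R - cnj R * a ^ 2 = 2 * a * of_real (1 - Re (R * cnj a))"
    and \<beta>: "2 * b - R - cnj R * b ^ 2 = 2 * b * of_real (1 - Re (R * cnj b))"
    unfolding of_real_diff using a0 b0
    by (simp_all add: cnj_unit[OF a] cnj_unit[OF b] field_simps power2_eq_square)
  have N: "1 - R * cnj R = of_real (1 - cmod R ^ 2)"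
    unfolding of_real_diff complex_norm_square by simp
  have L: "(a - b) ^ 2 = - a * b * of_real (cmod (a - b) ^ 2)"
    unfolding complex_norm_square cnj_unit[OF a] cnj_unit[OF b] complex_cnj_diff
    using a0 b0 by (simp add: field_simps power2_eq_square)
  show ?thesis unfolding \<alpha> \<beta> N L by (simp add: algebra_simps)
qed

lemma projectivity_form_eq_0_iff:
  fixes a b w1 w2 R :: complex and s t :: real
  assumes a: "cmod a = 1" and b: "cmod b = 1" and ab: "a \<noteq> b"
    and w1: "cmod w1 = 1" "w1 \<noteq> a" "w1 \<noteq> b" and w2: "cmod w2 = 1" "w2 \<noteq> a" "w2 \<noteq> b"
    and Rw2: "collinear {a, w2, R}" and Rw1: "collinear {b, w1, R}"
  shows "projectivity_form a b (of_real s) (of_real t) w1 w2 = 0 \<longleftrightarrow> locus_equation a b s t R"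
proof -
  have h1: "R + a * w2 * cnj R = a + w2"
    using collinear_unit_circle_iff[OF a w2(1) w2(2)[symmetric]] Rw2 by simp
  have h2: "R + b * w1 * cnj R = b + w1"
    using collinear_unit_circle_iff[OF b w1(1) w1(3)[symmetric]] Rw1 by simp
  have "a * w2 - b * w1 \<noteq> 0"
  proof
    assume "a * w2 - b * w1 = 0"
    then have "(a - b) * (a - w1) = 0" using h1 h2 by algebra
    then show False using ab w1(2) by simp
  qed
  moreover have "a * b \<noteq> 0" "(a - b) ^ 2 * (a - w1) * (b - w2) \<noteq> 0" using a b ab w1 w2 by auto
  moreover have "(a * w2 - b * w1) ^ 2 * (a * b) * of_real (4 * (1 - Re (R * cnj a)) * (1 - Re (R * cnj b)) * (t - s)
        - t * (1 - s) * (1 - cmod R ^ 2) * cmod (a - b) ^ 2)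
      = (a - b) ^ 2 * (a - w1) * (b - w2) * projectivity_form a b (of_real s) (of_real t) w1 w2"
    using projectivity_form_intersection[OF h1 h2, of "of_real t" "of_real s"]
      locus_equation_complex_form[OF a b, of R t s] by (simp add: mult.assoc)
  ultimately show ?thesis unfolding locus_equation_def
    by (metis (no_types, lifting) eq_iff_diff_eq_0 mult_eq_0_iff of_real_eq_0_iff power_eq_0_iff)
qed

lemma construction_imp_locus_equation:
  fixes a b w w1 w2 R :: complex and s t :: real
  assumes a: "cmod a = 1" and b: "cmod b = 1" and ab: "a \<noteq> b"
    and s: "0 < s" "s < 1" and t: "0 < t" "t < 1"
    and w: "cmod w = 1" "w \<noteq> a" "w \<noteq> b"
    and w1: "cmod w1 = 1" "w1 \<noteq> w" "collinear {w, a + of_real s * (b - a), w1}"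
    and w2: "cmod w2 = 1" "w2 \<noteq> w" "collinear {w, a + of_real t * (b - a), w2}"
    and R: "collinear {a, w2, R}" "collinear {b, w1, R}"
  shows "locus_equation a b s t R"
proof -
  have ab0: "a \<noteq> 0" "b \<noteq> 0" using a b by auto
  have "of_real s \<noteq> (0 :: complex)" "of_real s \<noteq> (1 :: complex)"
    "of_real t \<noteq> (0 :: complex)" "of_real t \<noteq> (1 :: complex)" using s t by auto
  note ends_s = chord_form_eq_0_endpoints[OF ab0 ab this(1,2)]
    and ends_t = chord_form_eq_0_endpoints[OF ab0 ab this(3,4)]
  have EP: "chord_form a b (of_real s) w w1 = 0"
    using collinear_line_point_iff_chord_form[OF a b w(1) w1(1) w1(2)[symmetric]] w1(3) by simp
  have EQ: "chord_form a b (of_real t) w w2 = 0"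
    using collinear_line_point_iff_chord_form[OF a b w(1) w2(1) w2(2)[symmetric]] w2(3) by simp
  have w1': "w1 \<noteq> a" "w1 \<noteq> b" using ends_s[OF EP] w by auto
  have w2': "w2 \<noteq> a" "w2 \<noteq> b" using ends_t[OF EQ] w by auto
  have "(1 - of_real t) * b * (a - w) + of_real t * a * (b - w) \<noteq> 0"
  proof
    assume "(1 - of_real t) * b * (a - w) + of_real t * a * (b - w) = 0"
    then have "chord_form a b (of_real t) w a = 0" using EQ unfolding chord_form_def by algebra
    then show False using ends_t(2) w(3) by blast
  qed
  then have "projectivity_form a b (of_real s) (of_real t) w1 w2 = 0"
    using projectivity_form_combination[of "of_real t" b a w "of_real s" w1 w2] EP EQ by simp
  then show ?thesis
    using projectivity_form_eq_0_iff[OF a b ab w1(1) w1' w2(1) w2' R] by simp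
qed

lemma locus_equation_imp_not_collinear:
  fixes a b R :: complex and s t :: real
  assumes a: "cmod a = 1" and b: "cmod b = 1" and ab: "a \<noteq> b"
    and s: "0 < s" and t: "t < 1" and R: "cmod R < 1" and "locus_equation a b s t R"
  shows "\<not> collinear {a, b, R}"
proof
  assume "collinear {a, b, R}"
  then obtain x where x: "R = a + of_real x * (b - a)" "0 < x" "x < 1"
    using collinear_disk_point_param[OF a b ab _ R] by blast
  define L where "L = cmod (a - b) ^ 2"
  have "L > 0" unfolding L_def using ab by simp
  have \<alpha>: "1 - Re (R * cnj a) = x * L / 2" and \<beta>: "1 - Re (R * cnj b) = (1 - x) * L / 2"
    using one_minus_Re_line_points[OF a b, of x 0] one_minus_Re_line_points[OF a b, of x 1]
    unfolding x(1)[symmetric] L_def by simp_all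
  have N: "1 - cmod R ^ 2 = x * (1 - x) * L" unfolding x(1) L_def by (rule one_minus_norm_line_point[OF a b])
  have "4 * (x * L / 2) * ((1 - x) * L / 2) * (t - s) = t * (1 - s) * (x * (1 - x) * L) * L"
    using assms(7) unfolding locus_equation_def L_def[symmetric] \<alpha> \<beta> N .
  then have "(x * (1 - x) * L ^ 2) * (t - s) = (x * (1 - x) * L ^ 2) * (t * (1 - s))"
    by (simp add: field_simps power2_eq_square)
  then have "t - s = t * (1 - s)" using x(2,3) \<open>L > 0\<close> by simp
  then have "s * (1 - t) = 0" by (simp add: algebra_simps)
  then show False using s t by simp
qed

lemma locus_equation_imp_construction:
  fixes a b R :: complex and s t :: real
  assumes a: "cmod a = 1" and b: "cmod b = 1" and ab: "a \<noteq> b"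
    and s: "0 < s" "s < 1" and t: "0 < t" "t < 1" and R: "cmod R < 1"
    and locus: "locus_equation a b s t R"
  obtains w w1 w2 where "cmod w = 1" "w \<noteq> a" "w \<noteq> b"
    and "cmod w1 = 1" "w1 \<noteq> w" "collinear {w, a + of_real s * (b - a), w1}"
    and "cmod w2 = 1" "w2 \<noteq> w" "collinear {w, a + of_real t * (b - a), w2}"
    and "collinear {a, w2, R}" "collinear {b, w1, R}"
proof -
  define Q where "Q = a + of_real t * (b - a)"
  have Q: "cmod Q < 1" unfolding Q_def using line_point_in_disk_iff[OF a b ab] t by simp
  have not_coll: "\<not> collinear {a, b, R}"
    using locus_equation_imp_not_collinear[OF a b ab s(1) t(2) R locus] .
  define w2 where "w2 = second_intersection a R"
  define w1 where "w1 = second_intersection b R"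
  define w where "w = second_intersection w2 Q"
  note w2 = second_intersection[OF a R, folded w2_def]
  note w1 = second_intersection[OF b R, folded w1_def]
  note w = second_intersection[OF w2(1) Q, folded w_def]
  have Rw2: "collinear {a, w2, R}" and Rw1: "collinear {b, w1, R}"
    using w2(3) w1(3) by (simp_all add: insert_commute)
  have w1a: "w1 \<noteq> a" and w2b: "w2 \<noteq> b"
    using Rw1 Rw2 not_coll by (auto simp: insert_commute)
  have Qw2: "collinear {w, Q, w2}" using w(3) by (simp add: insert_commute)
  then have EQ: "chord_form a b (of_real t) w w2 = 0"
    using collinear_line_point_iff_chord_form[OF a b w(1) w2(1) w(2)] unfolding Q_def by simp
  have "projectivity_form a b (of_real s) (of_real t) w1 w2 = 0"
    using projectivity_form_eq_0_iff[OF a b ab w1(1) w1a w1(2) w2(1) w2(2) w2b Rw2 Rw1] locus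
    by simp
  then have "t * (1 - t) * (a - b) * chord_form a b (of_real s) w w1 = 0"
    using projectivity_form_combination[of "of_real t" b a w "of_real s" w1 w2] EQ by simp
  then have EP: "chord_form a b (of_real s) w w1 = 0" using t ab by simp
  then have "w1 \<noteq> w" using chord_form_diagonal_ne_0[OF a b ab s w(1)] by blast
  moreover have "collinear {w, a + of_real s * (b - a), w1}"
    using collinear_line_point_iff_chord_form[OF a b w(1) w1(1)] EP \<open>w1 \<noteq> w\<close> by simp
  moreover have "a \<noteq> 0" "b \<noteq> 0" "of_real t \<noteq> (0 :: complex)" "of_real t \<noteq> (1 :: complex)"
    using a b t by auto
  then have "w \<noteq> a" "w \<noteq> b" using chord_form_eq_0_endpoints[OF _ _ ab _ _ EQ] w2b w2(2) by auto
  ultimately show ?thesis using that w(1,2) w1(1) w2(1) Qw2 Rw1 Rw2 unfolding Q_def by blast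
qed

lemma construction_iff_locus_equation:
  fixes a b R :: complex and s t :: real
  assumes a: "cmod a = 1" and b: "cmod b = 1" and ab: "a \<noteq> b"
    and s: "0 < s" "s < 1" and t: "0 < t" "t < 1" and R: "cmod R < 1"
  defines "P \<equiv> a + of_real s * (b - a)" and "Q \<equiv> a + of_real t * (b - a)"
  shows "(\<exists>w w1 w2. w \<in> Circle \<and> w \<noteq> a \<and> w \<noteq> b \<and>
            w1 \<in> Circle \<and> w1 \<noteq> w \<and> collinear {w, P, w1} \<and>
            w2 \<in> Circle \<and> w2 \<noteq> w \<and> collinear {w, Q, w2} \<and>
            collinear {a, w2, R} \<and> collinear {b, w1, R})
    \<longleftrightarrow> locus_equation a b s t R" (is "?construction \<longleftrightarrow> _")
proof
  assume ?construction
  then show "locus_equation a b s t R"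
    using construction_imp_locus_equation[OF a b ab s t] unfolding Circle_def P_def Q_def by blast
next
  assume "locus_equation a b s t R"
  then obtain w w1 w2 where "cmod w = 1" "w \<noteq> a" "w \<noteq> b"
    "cmod w1 = 1" "w1 \<noteq> w" "collinear {w, P, w1}"
    "cmod w2 = 1" "w2 \<noteq> w" "collinear {w, Q, w2}"
    "collinear {a, w2, R}" "collinear {b, w1, R}"
    using locus_equation_imp_construction[OF a b ab s t R] unfolding P_def Q_def by blast
  then show ?construction unfolding Circle_def by blast
qed

theorem lemma4p2:
  fixes P Q R v1 v2 :: complex
  assumes "P \<in> Disk" and "Q \<in> Disk" and "P \<noteq> Q"
    and "is_chord_ends P Q v1 v2"
    and "dist v1 P < dist v1 Q"
    and "R \<in> Disk"
  shows "(\<exists>w w1 w2. w \<in> Circle \<and> w \<noteq> v1 \<and> w \<noteq> v2 \<and>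
            w1 \<in> Circle \<and> w1 \<noteq> w \<and> collinear {w, P, w1} \<and>
            w2 \<in> Circle \<and> w2 \<noteq> w \<and> collinear {w, Q, w2} \<and>
            collinear {v1, w2, R} \<and> collinear {v2, w1, R})
         \<longleftrightarrow> delta P Q R = Delta' 1 P Q / 2"
proof -
  have a: "cmod v1 = 1" and b: "cmod v2 = 1" and ab: "v1 \<noteq> v2"
    and "collinear {v1, v2, P}" "collinear {v1, v2, Q}"
    using assms(4) unfolding is_chord_ends_def Circle_def by auto
  moreover have "cmod P < 1" "cmod Q < 1" and R: "cmod R < 1"
    using assms(1,2,6) unfolding Disk_def by auto
  ultimately obtain s t where P: "P = v1 + of_real s * (v2 - v1)" "0 < s" "s < 1"
    and Q: "Q = v1 + of_real t * (v2 - v1)" "0 < t" "t < 1"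
    using collinear_disk_point_param by metis
  have "s < t" using assms(5) ab P(2) Q(2) unfolding P(1) Q(1) dist_line_point by simp
  show ?thesis
    unfolding delta_eq_half_Delta'_iff[OF assms(4) P(1) Q(1) P(2) \<open>s < t\<close> Q(3) R]
    using construction_iff_locus_equation[OF a b ab P(2,3) Q(2,3) R] unfolding P(1) Q(1) .
qed

end
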